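(* Consider the coupled opinion–pollution model below, and assume $\beta>1/2$ and that the opinion state is fully synchronized (FS). Let $p_{\max}=Ne_{\max}/(1-\gamma)$ and $p_{\min}=Ne_{\min}/(1-\gamma)$. Then: - $(1,1)$ is an equilibrium in the action space if and only if $p_{\max}\le\bar p$; in this case $(\theta,p)=(\mathbf{1}_N,p_{\max})$ is a stable equilibrium of the coupled dynamics; - $(-1,-1)$ is an equilibrium in the action space if and only if $p_{\min}\ge\bar p$; in this case $(\theta,p)=(-\mathbf{1}_N,p_{\min})$ is a stable equilibrium of the coupled dynamics. Model: $N$ agents $\mathcal{V}=\{1,\dots,N\}$ on a fixed graph, agent $i$ having nonempty neighbor set $\mathcal{N}_i$ with $n_i=|\mathcal{N}_i|$. Actions: $q_i(k)=1$ if $\theta_i(k)>0$ or ($\theta_i(k)=0$ and $q_i(k-1)=1$), $q_i(k)=-1$ if $\theta_i(k)<0$ or ($\theta_i(k)=0$ and $q_i(k-1)=-1$). Emissions: $e_i(k)=e_{\min}$ if $q_i(k)=-1$ and $e_i(k)=e_{\max}$ if $q_i(k)=1$. Pollution: $p(k+1)=\gamma p(k)+\sum_{i=1}^N e_i(k)$ with $\gamma\in(0,1)$. Signal with threshold $\bar p$: $q_p(k)=-1$ if $p(k)>\bar p$ or ($p(k)=\bar p$ and $q_p(k-1)=-1$), and $q_p(k)=1$ if $p(k)<\bar p$ or ($p(k)=\bar p$ and $q_p(k-1)=1$). Opinions: $$\theta_i(k+1)=\theta_i(k)+\bigl(1-\theta_i(k)^2\bigr)\Bigl[\beta\bigl(q_p(k)-\theta_i(k)\bigr)+(1-\beta)\frac{1}{n_i}\sum_{j\in\mathcal{N}_i}\bigl(q_j(k)-\theta_i(k)\bigr)\Bigr],$$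 with $\beta\in[0,1]$, $\theta_i(0)\in(-1,1)\setminus\{0\}$ for all $i$, and $p(0)\ne\bar p$.
   Context: The opinion state $(\theta_1,\dots,\theta_N)$ is fully synchronized (FS) if $\theta_i=\theta_j$ for all $i,j$; this property is preserved in time, so one writes $\theta(k)$ and $q(k)$ for the common opinion and action. In the FS regime the action space is $\mathcal{S}=\{(q,q_p)\}=\{(-1,-1),(-1,1),(1,-1),(1,1)\}$. A point $s\in\mathcal{S}$ is an equilibrium in the action space if whenever $(q(k^* ),q_p(k^* ))=s$ for some $k^*$, then $(q(k),q_p(k))=s$ for all $k>k^*$. $\mathbf{1}_N$ denotes the all-ones vector in $\mathbb{R}^N$. *)

theory Defs
  imports Complex_Main
begin

text \<open>Agents are indexed by 1..N; opinions theta :: time => agent => real.\<close>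

definition act :: "real \<Rightarrow> real \<Rightarrow> real" where
  "act x prev = (if x > 0 then 1 else if x < 0 then -1 else prev)"

definition signal :: "real \<Rightarrow> real \<Rightarrow> real \<Rightarrow> real" where
  "signal pbar x prev = (if x > pbar then -1 else if x < pbar then 1 else prev)"

definition emission :: "real \<Rightarrow> real \<Rightarrow> real \<Rightarrow> real" where
  "emission emin emax a = (if a = 1 then emax else emin)"

definition theta_step :: "(nat \<Rightarrow> nat set) \<Rightarrow> real \<Rightarrow> (nat \<Rightarrow> real) \<Rightarrow> (nat \<Rightarrow> real) \<Rightarrow> real \<Rightarrow> nat \<Rightarrow> real" where
  "theta_step Nb beta th qv qpv i =
     th i + (1 - (th i)^2) * (beta * (qpv - th i)
        + (1 - beta) * ((1 / real (card (Nb i))) * (\<Sum>j\<in>Nb i. qv j - th i)))"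

definition p_step :: "nat \<Rightarrow> real \<Rightarrow> real \<Rightarrow> real \<Rightarrow> real \<Rightarrow> (nat \<Rightarrow> real) \<Rightarrow> real" where
  "p_step N gamma emin emax x qv = gamma * x + (\<Sum>i=1..N. emission emin emax (qv i))"

text \<open>A trajectory of the coupled opinion-pollution model (the memory values at time -1
  are irrelevant since theta_i(0) \<noteq> 0 and p(0) \<noteq> pbar; 0 is used as placeholder).\<close>

definition model_traj ::
  "nat \<Rightarrow> (nat \<Rightarrow> nat set) \<Rightarrow> real \<Rightarrow> real \<Rightarrow> real \<Rightarrow> real \<Rightarrow> real \<Rightarrow>
   (nat \<Rightarrow> nat \<Rightarrow> real) \<Rightarrow> (nat \<Rightarrow> real) \<Rightarrow> (nat \<Rightarrow> nat \<Rightarrow> real) \<Rightarrow> (nat \<Rightarrow> real) \<Rightarrow> bool" where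
  "model_traj N Nb beta gamma emin emax pbar th p q qp \<longleftrightarrow>
     (\<forall>i\<in>{1..N}. -1 < th 0 i \<and> th 0 i < 1 \<and> th 0 i \<noteq> 0) \<and> p 0 \<noteq> pbar \<and>
     (\<forall>i\<in>{1..N}. q 0 i = act (th 0 i) 0) \<and> qp 0 = signal pbar (p 0) 0 \<and>
     (\<forall>k. \<forall>i\<in>{1..N}. q (Suc k) i = act (th (Suc k) i) (q k i)) \<and>
     (\<forall>k. qp (Suc k) = signal pbar (p (Suc k)) (qp k)) \<and>
     (\<forall>k. p (Suc k) = p_step N gamma emin emax (p k) (q k)) \<and>
     (\<forall>k. \<forall>i\<in>{1..N}. th (Suc k) i = theta_step Nb beta (th k) (q k) (qp k) i)"

definition fully_synchronized :: "nat \<Rightarrow> (nat \<Rightarrow> real) \<Rightarrow> bool" where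
  "fully_synchronized N x \<longleftrightarrow> (\<forall>i\<in>{1..N}. \<forall>j\<in>{1..N}. x i = x j)"

definition actions_are :: "nat \<Rightarrow> (nat \<Rightarrow> nat \<Rightarrow> real) \<Rightarrow> (nat \<Rightarrow> real) \<Rightarrow> nat \<Rightarrow> real \<Rightarrow> real \<Rightarrow> bool" where
  "actions_are N q qp k a b \<longleftrightarrow> (\<forall>i\<in>{1..N}. q k i = a) \<and> qp k = b"

definition action_equilibrium ::
  "nat \<Rightarrow> (nat \<Rightarrow> nat set) \<Rightarrow> real \<Rightarrow> real \<Rightarrow> real \<Rightarrow> real \<Rightarrow> real \<Rightarrow> real \<Rightarrow> real \<Rightarrow> bool" where
  "action_equilibrium N Nb beta gamma emin emax pbar a b \<longleftrightarrow>
     (\<forall>th p q qp. model_traj N Nb beta gamma emin emax pbar th p q qp \<and> fully_synchronized N (th 0) \<longrightarrow>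
        (\<forall>k0. actions_are N q qp k0 a b \<longrightarrow> (\<forall>k>k0. actions_are N q qp k a b)))"

text \<open>(thE, pE) together with the actions (a,b) (as the memory of the hysteresis) is a
  fixed point of the coupled dynamics.\<close>
definition coupled_fixed_point ::
  "nat \<Rightarrow> (nat \<Rightarrow> nat set) \<Rightarrow> real \<Rightarrow> real \<Rightarrow> real \<Rightarrow> real \<Rightarrow> real \<Rightarrow> (nat \<Rightarrow> real) \<Rightarrow> real \<Rightarrow> real \<Rightarrow> real \<Rightarrow> bool" where
  "coupled_fixed_point N Nb beta gamma emin emax pbar thE pE a b \<longleftrightarrow>
     (\<forall>i\<in>{1..N}. act (thE i) a = a \<and> theta_step Nb beta thE (\<lambda>_. a) b i = thE i) \<and>
     signal pbar pE b = b \<and> p_step N gamma emin emax pE (\<lambda>_. a) = pE"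

definition lyapunov_stable ::
  "nat \<Rightarrow> (nat \<Rightarrow> nat set) \<Rightarrow> real \<Rightarrow> real \<Rightarrow> real \<Rightarrow> real \<Rightarrow> real \<Rightarrow> (nat \<Rightarrow> real) \<Rightarrow> real \<Rightarrow> real \<Rightarrow> real \<Rightarrow> bool" where
  "lyapunov_stable N Nb beta gamma emin emax pbar thE pE a b \<longleftrightarrow>
     (\<forall>\<epsilon>>0. \<exists>\<delta>>0. \<forall>th p q qp k0.
        model_traj N Nb beta gamma emin emax pbar th p q qp \<and> fully_synchronized N (th 0) \<and>
        actions_are N q qp k0 a b \<and>
        (\<forall>i\<in>{1..N}. \<bar>th k0 i - thE i\<bar> < \<delta>) \<and> \<bar>p k0 - pE\<bar> < \<delta> \<longrightarrow>
        (\<forall>k\<ge>k0. (\<forall>i\<in>{1..N}. \<bar>th k i - thE i\<bar> < \<epsilon>) \<and> \<bar>p k - pE\<bar> < \<epsilon>))"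

definition stable_equilibrium ::
  "nat \<Rightarrow> (nat \<Rightarrow> nat set) \<Rightarrow> real \<Rightarrow> real \<Rightarrow> real \<Rightarrow> real \<Rightarrow> real \<Rightarrow> (nat \<Rightarrow> real) \<Rightarrow> real \<Rightarrow> real \<Rightarrow> real \<Rightarrow> bool" where
  "stable_equilibrium N Nb beta gamma emin emax pbar thE pE a b \<longleftrightarrow>
     coupled_fixed_point N Nb beta gamma emin emax pbar thE pE a b \<and>
     lyapunov_stable N Nb beta gamma emin emax pbar thE pE a b"

end

theory Submission
  imports Defs
begin

text \<open>Under the consensus action (a, a), with a = 1 or a = -1, every agent's target in the
  opinion update is a itself, so each a \<theta>_i follows y \<mapsto> y + (1 - y^2)(1 - y), which moves
  monotonically towards 1 and never changes sign, while the pollution contracts with rate \<gamma>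
  towards the steady level p_a = N e_a / (1 - \<gamma>). Hence (a, a) persists exactly when p_a lies on
  the side of the threshold that keeps the signal at a, and then (a 1_N, p_a) is Lyapunov stable
  with \<delta> = \<epsilon>. If p_a lies strictly on the other side, a trajectory starting at \<theta> = a/2 1_N with
  p(0) on the right side but close enough to the threshold flips the signal after one step.\<close>

lemma act_mult_nonneg: "0 \<le> act x prev * x"
  by (simp add: act_def)

lemma act_eqI:
  assumes "a \<in> {-1, 1}" "0 \<le> a * x" "x = 0 \<Longrightarrow> prev = a"
  shows "act x prev = a"
  using assms by (auto simp: act_def zero_le_mult_iff)

lemma act_abs_le_1: "\<bar>prev\<bar> \<le> 1 \<Longrightarrow> \<bar>act x prev\<bar> \<le> 1"
  by (simp add: act_def)

lemma signal_mult_nonpos: "signal pbar x prev * (x - pbar) \<le> 0"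
  by (simp add: signal_def)

lemma signal_eqI:
  assumes "b \<in> {-1, 1}" "b * (x - pbar) \<le> 0" "x = pbar \<Longrightarrow> prev = b"
  shows "signal pbar x prev = b"
  using assms by (auto simp: signal_def mult_le_0_iff)

lemma signal_abs_le_1: "\<bar>prev\<bar> \<le> 1 \<Longrightarrow> \<bar>signal pbar x prev\<bar> \<le> 1"
  by (simp add: signal_def)

lemma le_opinion_step:
  fixes y :: real
  assumes "-1 \<le> y"
  shows "y \<le> y + (1 - y\<^sup>2) * (1 - y)"
proof -
  have "(1 - y\<^sup>2) * (1 - y) = (1 + y) * (1 - y)\<^sup>2"
    by (simp add: algebra_simps power2_eq_square)
  also have "\<dots> \<ge> 0"
    using assms by simp
  finally show ?thesis by simp
qed

lemma opinion_step_le_1: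
  fixes y :: real
  assumes "y \<le> 1"
  shows "y + (1 - y\<^sup>2) * (1 - y) \<le> 1"
proof -
  have "1 - (y + (1 - y\<^sup>2) * (1 - y)) = (1 - y) * y\<^sup>2"
    by (simp add: algebra_simps power2_eq_square)
  also have "\<dots> \<ge> 0"
    using assms by simp
  finally show ?thesis by simp
qed

text \<open>The update is monotone in c, so c = 1 and, after reflecting x, c = -1 are the extreme cases.\<close>

lemma opinion_step_abs_le_1:
  fixes x c :: real
  assumes x: "\<bar>x\<bar> \<le> 1" and c: "\<bar>c\<bar> \<le> 1"
  shows "\<bar>x + (1 - x\<^sup>2) * (c - x)\<bar> \<le> 1"
proof -
  have w: "0 \<le> 1 - x\<^sup>2"
    using x by (simp add: abs_square_le_1)
  have "x + (1 - x\<^sup>2) * (c - x) \<le> x + (1 - x\<^sup>2) * (1 - x)"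
    using w c by (simp add: mult_left_mono)
  also have "\<dots> \<le> 1"
    using x by (intro opinion_step_le_1) simp
  finally have upper: "x + (1 - x\<^sup>2) * (c - x) \<le> 1" .
  have "-1 \<le> - ((- x) + (1 - (- x)\<^sup>2) * (1 - (- x)))"
    using x opinion_step_le_1[of "- x"] by linarith
  also have "\<dots> = x + (1 - x\<^sup>2) * (-1 - x)"
    by (simp add: algebra_simps)
  also have "\<dots> \<le> x + (1 - x\<^sup>2) * (c - x)"
    using w c by (simp add: mult_left_mono)
  finally show ?thesis
    using upper by simp
qed

lemma opinion_step_reflect:
  fixes a x :: real
  assumes "a \<in> {-1, 1}"
  shows "a * (x + (1 - x\<^sup>2) * (a - x)) = a * x + (1 - (a * x)\<^sup>2) * (1 - a * x)"
  using assms by (auto simp: algebra_simps power2_eq_square)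

lemma mean_abs_le_1:
  fixes f :: "'a \<Rightarrow> real"
  assumes "finite S" "S \<noteq> {}" "\<And>j. j \<in> S \<Longrightarrow> \<bar>f j\<bar> \<le> 1"
  shows "\<bar>(\<Sum>j\<in>S. f j) / card S\<bar> \<le> 1"
proof -
  have "\<bar>\<Sum>j\<in>S. f j\<bar> \<le> (\<Sum>j\<in>S. \<bar>f j\<bar>)"
    by (rule sum_abs)
  also have "\<dots> \<le> real (card S) * 1"
    using assms(3) by (rule sum_bounded_above)
  finally show ?thesis
    using assms(1,2) by (simp add: abs_divide divide_le_eq_1 card_gt_0_iff)
qed

lemma theta_step_eq:
  assumes "finite (Nb i)" "Nb i \<noteq> {}"
  shows "theta_step Nb beta th qv qpv i =
    th i + (1 - (th i)\<^sup>2) * (beta * qpv + (1 - beta) * ((\<Sum>j\<in>Nb i. qv j) / card (Nb i)) - th i)"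
proof -
  have "card (Nb i) \<noteq> 0"
    using assms by simp
  then show ?thesis
    unfolding theta_step_def by (simp add: sum_subtractf field_simps)
qed

lemma theta_step_abs_le_1:
  assumes "finite (Nb i)" "Nb i \<noteq> {}" "0 \<le> beta" "beta \<le> 1"
    and "\<bar>th i\<bar> \<le> 1" "\<bar>qpv\<bar> \<le> 1" "\<And>j. j \<in> Nb i \<Longrightarrow> \<bar>qv j\<bar> \<le> 1"
  shows "\<bar>theta_step Nb beta th qv qpv i\<bar> \<le> 1"
proof -
  let ?m = "(\<Sum>j\<in>Nb i. qv j) / card (Nb i)"
  have m: "\<bar>?m\<bar> \<le> 1"
    using assms by (intro mean_abs_le_1)
  have "\<bar>beta * qpv + (1 - beta) * ?m\<bar> \<le> beta * \<bar>qpv\<bar> + (1 - beta) * \<bar>?m\<bar>"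
    using assms(3,4) abs_triangle_ineq[of "beta * qpv" "(1 - beta) * ?m"] by (simp add: abs_mult)
  also have "\<dots> \<le> 1"
    using assms(3,4,6) m by (intro convex_bound_le) auto
  finally show ?thesis
    using assms by (simp add: theta_step_eq opinion_step_abs_le_1)
qed

lemma action_equilibriumD:
  assumes "action_equilibrium N Nb beta gamma emin emax pbar a b"
    and "model_traj N Nb beta gamma emin emax pbar th p q qp" "fully_synchronized N (th 0)"
    and "actions_are N q qp k0 a b" "k0 < k"
  shows "actions_are N q qp k a b"
  using assms unfolding action_equilibrium_def by blast

type_synonym model_state = "(nat \<Rightarrow> real) \<times> real \<times> (nat \<Rightarrow> real) \<times> real"

locale opinion_pollution =
  fixes N :: nat and Nb :: "nat \<Rightarrow> nat set" and beta gamma emin emax pbar :: real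
  assumes neighbours: "\<forall>i\<in>{1..N}. Nb i \<subseteq> {1..N} \<and> Nb i \<noteq> {}"
    and gamma: "0 < gamma" "gamma < 1"
    and beta: "0 \<le> beta" "beta \<le> 1"
begin

abbreviation traj where
  "traj \<equiv> model_traj N Nb beta gamma emin emax pbar"

definition steady_pollution :: "real \<Rightarrow> real" where
  "steady_pollution a = real N * emission emin emax a / (1 - gamma)"

lemma neighbours_finite: "i \<in> {1..N} \<Longrightarrow> finite (Nb i)"
  using neighbours finite_subset[of "Nb i" "{1..N}"] by blast

lemma neighbours_nonempty: "i \<in> {1..N} \<Longrightarrow> Nb i \<noteq> {}"
  using neighbours by blast

definition model_step :: "model_state \<Rightarrow> model_state" where
  "model_step = (\<lambda>(th, p, q, qp).
     let th' = theta_step Nb beta th q qp; p' = p_step N gamma emin emax p q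
     in (th', p', \<lambda>i. act (th' i) (q i), signal pbar p' qp))"

lemma model_traj_exists:
  assumes "\<forall>i\<in>{1..N}. -1 < th0 i \<and> th0 i < 1 \<and> th0 i \<noteq> 0" "p0 \<noteq> pbar"
  obtains th p q qp where "traj th p q qp" "th 0 = th0" "p 0 = p0"
proof -
  define s where "s k = (model_step ^^ k) (th0, p0, \<lambda>i. act (th0 i) 0, signal pbar p0 0)" for k
  have "traj (\<lambda>k. fst (s k)) (\<lambda>k. fst (snd (s k))) (\<lambda>k. fst (snd (snd (s k))))
      (\<lambda>k. snd (snd (snd (s k))))"
    using assms unfolding model_traj_def s_def by (simp add: model_step_def Let_def split_beta)
  then show ?thesis
    using that by (simp add: s_def)
qed

lemma traj_actions_bounded:
  assumes "traj th p q qp" "i \<in> {1..N}"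
  shows "\<bar>q k i\<bar> \<le> 1"
  using assms by (induction k) (auto simp: model_traj_def intro: act_abs_le_1)

lemma traj_signal_bounded:
  assumes "traj th p q qp"
  shows "\<bar>qp k\<bar> \<le> 1"
  using assms by (induction k) (auto simp: model_traj_def intro: signal_abs_le_1)

lemma traj_opinions_bounded:
  assumes traj: "traj th p q qp" and i: "i \<in> {1..N}"
  shows "\<bar>th k i\<bar> \<le> 1"
  using i
proof (induction k arbitrary: i)
  case 0
  then have "-1 < th 0 i \<and> th 0 i < 1"
    using traj by (simp add: model_traj_def)
  then show ?case
    by (simp add: abs_le_iff)
next
  case (Suc k)
  have "\<bar>theta_step Nb beta (th k) (q k) (qp k) i\<bar> \<le> 1"
  proof (rule theta_step_abs_le_1)
    show "\<bar>q k j\<bar> \<le> 1" if "j \<in> Nb i" for j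
      using that Suc.prems neighbours traj_actions_bounded[OF traj] by blast
  qed (use Suc traj_signal_bounded[OF traj] beta neighbours_finite neighbours_nonempty in auto)
  then show ?case
    using traj Suc.prems by (simp add: model_traj_def)
qed

lemma traj_action_sign:
  assumes "traj th p q qp" "i \<in> {1..N}"
  shows "0 \<le> q k i * th k i"
  using assms by (cases k) (auto simp: model_traj_def act_mult_nonneg)

lemma traj_signal_sign:
  assumes "traj th p q qp"
  shows "qp k * (p k - pbar) \<le> 0"
  using assms by (cases k) (auto simp: model_traj_def signal_mult_nonpos)

lemma traj_consensus_opinion:
  assumes traj: "traj th p q qp" and acts: "actions_are N q qp k a a" and i: "i \<in> {1..N}"
  shows "th (Suc k) i = th k i + (1 - (th k i)\<^sup>2) * (a - th k i)"
proof -
  have "Nb i \<subseteq> {1..N}"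
    using i neighbours by blast
  then have "(\<Sum>j\<in>Nb i. q k j) = (\<Sum>j\<in>Nb i. a)"
    using acts unfolding actions_are_def by (intro sum.cong) blast+
  then have mean: "(\<Sum>j\<in>Nb i. q k j) / card (Nb i) = a"
    using i neighbours_finite neighbours_nonempty by simp
  have "th (Suc k) i = theta_step Nb beta (th k) (q k) (qp k) i"
    using traj i by (simp add: model_traj_def)
  also have "\<dots> = th k i + (1 - (th k i)\<^sup>2) * (beta * a + (1 - beta) * a - th k i)"
    using i acts mean neighbours_finite neighbours_nonempty by (simp add: theta_step_eq actions_are_def)
  finally show ?thesis
    by (simp add: algebra_simps)
qed

lemma traj_consensus_pollution:
  assumes traj: "traj th p q qp" and acts: "\<forall>i\<in>{1..N}. q k i = a"
  shows "p (Suc k) - steady_pollution a = gamma * (p k - steady_pollution a)"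
proof -
  have "p (Suc k) = gamma * p k + real N * emission emin emax a"
    using traj acts by (simp add: model_traj_def p_step_def)
  then show ?thesis
    using gamma by (simp add: steady_pollution_def field_simps)
qed

lemma traj_consensus_opinion_sign:
  assumes "traj th p q qp" "actions_are N q qp k a a" "i \<in> {1..N}" "a \<in> {-1, 1}"
  shows "a * th (Suc k) i = a * th k i + (1 - (a * th k i)\<^sup>2) * (1 - a * th k i)"
  using assms by (simp add: traj_consensus_opinion opinion_step_reflect)

lemma consensus_persists_Suc:
  assumes a: "a \<in> {-1, 1}" and side: "a * (steady_pollution a - pbar) \<le> 0"
    and traj: "traj th p q qp" and acts: "actions_are N q qp k a a"
  shows "actions_are N q qp (Suc k) a a"
proof -
  have "q (Suc k) i = a" if i: "i \<in> {1..N}" for i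
  proof -
    have "0 \<le> a * th k i"
      using traj_action_sign[OF traj i, of k] acts i by (simp add: actions_are_def)
    also have "\<dots> \<le> a * th (Suc k) i"
      using calculation traj_consensus_opinion_sign[OF traj acts i a] le_opinion_step[of "a * th k i"]
      by simp
    finally have "0 \<le> a * th (Suc k) i" .
    then show ?thesis
      using traj acts i a by (simp add: model_traj_def actions_are_def act_eqI)
  qed
  moreover have "qp (Suc k) = a"
  proof -
    let ?pE = "steady_pollution a"
    have "a * (p k - pbar) \<le> 0"
      using traj_signal_sign[OF traj, of k] acts by (simp add: actions_are_def)
    moreover have pSuc: "p (Suc k) = gamma * (p k - ?pE) + ?pE"
      using traj_consensus_pollution[OF traj, of k a] acts by (simp add: actions_are_def)
    have "a * (p (Suc k) - pbar) = gamma * (a * (p k - pbar)) + (1 - gamma) * (a * (?pE - pbar))"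
      unfolding pSuc by (simp add: algebra_simps)
    ultimately have "a * (p (Suc k) - pbar) \<le> 0"
      using gamma side by (simp add: mult_nonneg_nonpos add_nonpos_nonpos)
    then show ?thesis
      using traj acts a by (simp add: model_traj_def actions_are_def signal_eqI)
  qed
  ultimately show ?thesis
    by (simp add: actions_are_def)
qed

lemma consensus_persists:
  assumes "a \<in> {-1, 1}" "a * (steady_pollution a - pbar) \<le> 0"
    and "traj th p q qp" "actions_are N q qp k0 a a" "k0 \<le> k"
  shows "actions_are N q qp k a a"
  using assms(5,4) by (induction k rule: dec_induct) (use assms(1-3) consensus_persists_Suc in auto)

lemma not_action_equilibrium:
  assumes a: "a \<in> {-1, 1}" and wrong_side: "0 < a * (steady_pollution a - pbar)"
  shows "\<not> action_equilibrium N Nb beta gamma emin emax pbar a a"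
proof
  assume equilibrium: "action_equilibrium N Nb beta gamma emin emax pbar a a"
  let ?pE = "steady_pollution a"
  define p0 where "p0 = pbar - (1 - gamma) * (?pE - pbar)"
  have "a * (p0 - pbar) = - ((1 - gamma) * (a * (?pE - pbar)))"
    by (simp add: p0_def algebra_simps)
  also have "\<dots> < 0"
    using gamma wrong_side by simp
  finally have p0_side: "a * (p0 - pbar) < 0" .
  then have p0_ne: "p0 \<noteq> pbar"
    by auto
  have init: "\<forall>i\<in>{1..N}. -1 < a / 2 \<and> a / 2 < 1 \<and> a / 2 \<noteq> 0"
    using a by auto
  obtain th p q qp where traj: "traj th p q qp" and th0: "th 0 = (\<lambda>_. a / 2)" and p0: "p 0 = p0"
    by (rule model_traj_exists[OF init p0_ne])
  have "act (a / 2) 0 = a"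
    using a by (auto simp: act_def)
  moreover have "signal pbar p0 0 = a"
    using p0_side p0_ne by (intro signal_eqI[OF a]) simp_all
  ultimately have acts0: "actions_are N q qp 0 a a"
    using traj th0 p0 by (simp add: model_traj_def actions_are_def)
  have "fully_synchronized N (th 0)"
    by (simp add: th0 fully_synchronized_def)
  then have "actions_are N q qp 1 a a"
    using action_equilibriumD[OF equilibrium traj _ acts0] by simp
  then have "a * (p 1 - pbar) \<le> 0"
    using traj_signal_sign[OF traj, of 1] by (simp add: actions_are_def)
  moreover have "p 1 - pbar = (1 - gamma)\<^sup>2 * (?pE - pbar)"
    using traj_consensus_pollution[OF traj, of 0 a] acts0 p0
    by (simp add: actions_are_def p0_def algebra_simps power2_eq_square)
  then have "a * (p 1 - pbar) = (1 - gamma)\<^sup>2 * (a * (?pE - pbar))"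
    by simp
  moreover have "0 < (1 - gamma)\<^sup>2 * (a * (?pE - pbar))"
    using gamma wrong_side by simp
  ultimately show False
    by linarith
qed

lemma action_equilibrium_iff:
  assumes "a \<in> {-1, 1}"
  shows "action_equilibrium N Nb beta gamma emin emax pbar a a \<longleftrightarrow> a * (steady_pollution a - pbar) \<le> 0"
proof
  show "a * (steady_pollution a - pbar) \<le> 0" if "action_equilibrium N Nb beta gamma emin emax pbar a a"
    using that not_action_equilibrium[OF assms] by (meson not_le)
next
  show "action_equilibrium N Nb beta gamma emin emax pbar a a" if "a * (steady_pollution a - pbar) \<le> 0"
    unfolding action_equilibrium_def using consensus_persists[OF assms that] by (auto intro: less_imp_le)
qed

lemma consensus_opinion_monotone:
  assumes a: "a \<in> {-1, 1}" and side: "a * (steady_pollution a - pbar) \<le> 0"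
    and traj: "traj th p q qp" and acts: "actions_are N q qp k0 a a" and i: "i \<in> {1..N}"
    and "k0 \<le> k"
  shows "a * th k0 i \<le> a * th k i \<and> a * th k i \<le> 1"
  using \<open>k0 \<le> k\<close>
proof (induction k rule: dec_induct)
  case base
  show ?case
    using traj_opinions_bounded[OF traj i, of k0] a by (auto simp: abs_le_iff)
next
  case (step k)
  have "-1 \<le> a * th k i"
    using traj_opinions_bounded[OF traj i, of k] a by (auto simp: abs_le_iff)
  moreover have "a * th (Suc k) i = a * th k i + (1 - (a * th k i)\<^sup>2) * (1 - a * th k i)"
    using traj_consensus_opinion_sign[OF traj consensus_persists[OF a side traj acts step.hyps(1)] i a] .
  ultimately show ?case
    using step.IH le_opinion_step[of "a * th k i"] opinion_step_le_1[of "a * th k i"] by simp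
qed

lemma consensus_pollution_contracts:
  assumes a: "a \<in> {-1, 1}" and side: "a * (steady_pollution a - pbar) \<le> 0"
    and traj: "traj th p q qp" and acts: "actions_are N q qp k0 a a" and "k0 \<le> k"
  shows "\<bar>p k - steady_pollution a\<bar> \<le> \<bar>p k0 - steady_pollution a\<bar>"
  using \<open>k0 \<le> k\<close>
proof (induction k rule: dec_induct)
  case (step k)
  have "p (Suc k) - steady_pollution a = gamma * (p k - steady_pollution a)"
    using traj_consensus_pollution[OF traj] consensus_persists[OF a side traj acts step.hyps(1)]
    by (simp add: actions_are_def)
  then have "\<bar>p (Suc k) - steady_pollution a\<bar> \<le> \<bar>p k - steady_pollution a\<bar>"
    using gamma by (simp add: abs_mult mult_left_le_one_le)
  then show ?case
    using step.IH by linarith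
qed simp

lemma consensus_stable_equilibrium:
  assumes a: "a \<in> {-1, 1}" and side: "a * (steady_pollution a - pbar) \<le> 0"
  shows "stable_equilibrium N Nb beta gamma emin emax pbar (\<lambda>_. a) (steady_pollution a) a a"
proof -
  have "p_step N gamma emin emax (steady_pollution a) (\<lambda>_. a) = steady_pollution a"
    using gamma by (simp add: p_step_def steady_pollution_def field_simps)
  moreover have "signal pbar (steady_pollution a) a = a"
    using side by (intro signal_eqI[OF a]) simp_all
  moreover have "act a a = a" "theta_step Nb beta (\<lambda>_. a) (\<lambda>_. a) a i = a" for i
    using a by (auto simp: act_def theta_step_def)
  ultimately have "coupled_fixed_point N Nb beta gamma emin emax pbar (\<lambda>_. a) (steady_pollution a) a a"
    by (simp add: coupled_fixed_point_def)
  moreover have "(\<forall>i\<in>{1..N}. \<bar>th k i - a\<bar> < \<epsilon>) \<and> \<bar>p k - steady_pollution a\<bar> < \<epsilon>"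
    if hyps: "traj th p q qp \<and> fully_synchronized N (th 0) \<and> actions_are N q qp k0 a a \<and>
        (\<forall>i\<in>{1..N}. \<bar>th k0 i - a\<bar> < \<epsilon>) \<and> \<bar>p k0 - steady_pollution a\<bar> < \<epsilon>" and "k0 \<le> k"
    for th p q qp k0 k \<epsilon>
  proof (intro conjI ballI)
    from hyps have traj: "traj th p q qp" and acts: "actions_are N q qp k0 a a"
      by simp_all
    show "\<bar>th k i - a\<bar> < \<epsilon>" if i: "i \<in> {1..N}" for i
    proof -
      have "a * th k0 i \<le> a * th k i" "a * th k i \<le> 1"
        using consensus_opinion_monotone[OF a side traj acts i \<open>k0 \<le> k\<close>] by simp_all
      then have "\<bar>th k i - a\<bar> \<le> \<bar>th k0 i - a\<bar>"
        using a by (auto simp: abs_le_iff)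
      then show ?thesis
        using hyps i by fastforce
    qed
    show "\<bar>p k - steady_pollution a\<bar> < \<epsilon>"
      using consensus_pollution_contracts[OF a side traj acts \<open>k0 \<le> k\<close>] hyps by linarith
  qed
  then have "lyapunov_stable N Nb beta gamma emin emax pbar (\<lambda>_. a) (steady_pollution a) a a"
    unfolding lyapunov_stable_def by blast
  ultimately show ?thesis
    by (simp add: stable_equilibrium_def)
qed

end

theorem mainTheorem8:
  fixes N :: nat and Nb :: "nat \<Rightarrow> nat set"
    and beta gamma emin emax pbar pmax pmin :: real
  assumes N: "N \<ge> 1"
    and Nb: "\<forall>i\<in>{1..N}. Nb i \<subseteq> {1..N} \<and> Nb i \<noteq> {}"
    and gamma: "0 < gamma" "gamma < 1"
    and beta: "1/2 < beta" "beta \<le> 1"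
    and pmax_def: "pmax = real N * emax / (1 - gamma)"
    and pmin_def: "pmin = real N * emin / (1 - gamma)"
  shows "(action_equilibrium N Nb beta gamma emin emax pbar 1 1 \<longleftrightarrow> pmax \<le> pbar) \<and>
         (pmax \<le> pbar \<longrightarrow> stable_equilibrium N Nb beta gamma emin emax pbar (\<lambda>_. 1) pmax 1 1) \<and>
         (action_equilibrium N Nb beta gamma emin emax pbar (-1) (-1) \<longleftrightarrow> pmin \<ge> pbar) \<and>
         (pmin \<ge> pbar \<longrightarrow> stable_equilibrium N Nb beta gamma emin emax pbar (\<lambda>_. -1) pmin (-1) (-1))"
proof -
  interpret opinion_pollution N Nb beta gamma emin emax pbar
    using Nb gamma beta by unfold_locales simp_all
  have "steady_pollution 1 = pmax" "steady_pollution (-1) = pmin"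
    by (simp_all add: steady_pollution_def emission_def pmax_def pmin_def)
  then show ?thesis
    using action_equilibrium_iff[of 1] action_equilibrium_iff[of "-1"]
      consensus_stable_equilibrium[of 1] consensus_stable_equilibrium[of "-1"]
    by auto
qed

end
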